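(* The poset $(\mathcal{D},\le)$ is a lattice.
   Context: A Dyck path of length $2m$ ($m\ge0$) is a lattice path from $(0,0)$ to $(2m,0)$ with steps $\nearrow=(1,1)$, $\searrow=(1,-1)$ never going below the $x$-axis; write $P(x)$ for its height at abscissa $x$. A cell is a point $(a,b)\in\mathbb{Z}^2$ with $b\ge0$, $a+b$ even (viewed as the tilted square with vertices $(a,b),(a+1,b\pm1),(a+2,b)$). The Dyck shape of $P$ (length $2m$) is $S(P)=\{(a,b): b\ge0,\ a+b\text{ even},\ 0\le a\le 2m-2,\ b+1\le P(a+1)\}$. Cells are adjacent if they differ by $(\pm1,\pm1)$. A ribbon is a nonempty set of cells, connected for adjacency, containing no four cells $(a,b),(a+1,b+1),(a+1,b-1),(a+2,b)$. For Dyck paths $D$ of length $2m$ and $E$ of length $2m+2$, $D\sqsubset E$ means $S(D)\subseteq S(E)$ and $S(E)\setminus S(D)$ is a ribbon. $(\mathcal{D},\le)$ is the set of all Dyck paths of all lengths (including the empty path) with $\le$ the reflexive and transitive closure of $\sqsubset$. *)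

theory Defs
  imports Main
begin

text \<open>A lattice path is a list of steps: True = up step (1,1), False = down step (1,-1).\<close>

definition step_val :: "bool \<Rightarrow> int" where
  "step_val s = (if s then 1 else -1)"

definition hgt :: "bool list \<Rightarrow> int \<Rightarrow> int" where
  "hgt P x = sum_list (map step_val (take (nat x) P))"

definition dyck :: "bool list \<Rightarrow> bool" where
  "dyck P \<longleftrightarrow> (\<forall>x. 0 \<le> x \<and> x \<le> int (length P) \<longrightarrow> 0 \<le> hgt P x)
              \<and> hgt P (int (length P)) = 0"

definition shape :: "bool list \<Rightarrow> (int \<times> int) set" where
  "shape P = {(a, b). 0 \<le> b \<and> even (a + b) \<and> 0 \<le> a \<and> a \<le> int (length P) - 2
                      \<and> b + 1 \<le> hgt P (a + 1)}"

definition adjacent :: "int \<times> int \<Rightarrow> int \<times> int \<Rightarrow> bool" where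
  "adjacent c d \<longleftrightarrow> \<bar>fst c - fst d\<bar> = 1 \<and> \<bar>snd c - snd d\<bar> = 1"

definition connected_cells :: "(int \<times> int) set \<Rightarrow> bool" where
  "connected_cells R \<longleftrightarrow>
     (\<forall>c\<in>R. \<forall>d\<in>R. (c, d) \<in> {(x, y). x \<in> R \<and> y \<in> R \<and> adjacent x y}\<^sup>*)"

definition ribbon :: "(int \<times> int) set \<Rightarrow> bool" where
  "ribbon R \<longleftrightarrow> R \<noteq> {} \<and> connected_cells R \<and>
     \<not> (\<exists>a b. (a, b) \<in> R \<and> (a + 1, b + 1) \<in> R \<and> (a + 1, b - 1) \<in> R \<and> (a + 2, b) \<in> R)"

definition dcover :: "bool list \<Rightarrow> bool list \<Rightarrow> bool" where
  "dcover D E \<longleftrightarrow> dyck D \<and> dyck E \<and> length E = length D + 2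
                  \<and> shape D \<subseteq> shape E \<and> ribbon (shape E - shape D)"

definition dle :: "bool list \<Rightarrow> bool list \<Rightarrow> bool" where
  "dle D E \<longleftrightarrow> dcover\<^sup>*\<^sup>* D E"

end

(* A Dyck path is determined by the set of positions of its up steps, and the sets arising this
   way are exactly the ballot sets: finite A such that every initial segment [0, x) with
   x \<le> 2|A| contains at least x/2 elements of A.
   For Dyck paths D and E of lengths n and n + 2, look at the gap E - D between the two height
   functions. The skew shape S(E) - S(D) is a ribbon exactly when the gap is nondecreasing with
   values 0 and 2 on [0, n]: a gap of 4 produces a forbidden 2x2 block, and a drop from 2 to 0
   disconnects the skew shape. A nondecreasing gap means that every up step of D is an up step
   of E. Adding the least missing up step one at a time then shows that D \<le> E iff the up steps
   of D are among those of E, so the order is inclusion of ballot sets. These are closed under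
   union: the join is the union of the up-step sets, the meet the union of all ballot sets
   inside their intersection. *)

theory Submission
  imports Defs
begin

lemma mono_on_int_interval_iff:
  fixes f :: "int \<Rightarrow> 'a::preorder"
  shows "mono_on {a..b} f \<longleftrightarrow> (\<forall>x. a \<le> x \<and> x < b \<longrightarrow> f x \<le> f (x + 1))"
proof
  assume "mono_on {a..b} f"
  then show "\<forall>x. a \<le> x \<and> x < b \<longrightarrow> f x \<le> f (x + 1)"
    by (auto intro: mono_onD)
next
  assume steps: "\<forall>x. a \<le> x \<and> x < b \<longrightarrow> f x \<le> f (x + 1)"
  show "mono_on {a..b} f"
  proof (rule mono_onI)
    fix r s assume r: "r \<in> {a..b}" and s: "s \<in> {a..b}" and "r \<le> s"
    have "s \<le> b \<longrightarrow> f r \<le> f s"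
      using \<open>r \<le> s\<close>
    proof (induction s rule: int_ge_induct)
      case (step s)
      then show ?case using steps r by (auto intro: order_trans)
    qed simp
    then show "f r \<le> f s" using s by simp
  qed
qed

lemma hgt_nonpos: "x \<le> 0 \<Longrightarrow> hgt P x = 0"
  by (simp add: hgt_def)

definition up_steps :: "bool list \<Rightarrow> nat set" where
  "up_steps P = {i. i < length P \<and> P ! i}"

lemma up_steps_subset: "up_steps P \<subseteq> {..<length P}"
  by (auto simp: up_steps_def)

lemma finite_up_steps [simp]: "finite (up_steps P)"
  using up_steps_subset finite_subset by blast

lemma hgt_Suc:
  assumes "0 \<le> x" "x < int (length P)"
  shows "hgt P (x + 1) = hgt P x + (if nat x \<in> up_steps P then 1 else -1)"
proof -
  have "nat (x + 1) = Suc (nat x)" "nat x < length P" using assms by auto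
  then show ?thesis by (simp add: hgt_def take_Suc_conv_app_nth up_steps_def step_val_def)
qed

lemma hgt_Suc_diff: "\<bar>hgt P (x + 1) - hgt P x\<bar> \<le> 1"
proof (cases "0 \<le> x \<and> x < int (length P)")
  case True
  then show ?thesis by (simp add: hgt_Suc)
next
  case False
  then have "take (nat (x + 1)) P = take (nat x) P" by auto
  then show ?thesis by (simp add: hgt_def)
qed

lemma hgt_eq_card_up_steps:
  "k \<le> length P \<Longrightarrow> hgt P (int k) = 2 * int (card (up_steps P \<inter> {..<k})) - int k"
proof (induction k)
  case 0
  then show ?case by (simp add: hgt_nonpos)
next
  case (Suc k)
  have "up_steps P \<inter> {..<Suc k} =
      (if k \<in> up_steps P then insert k (up_steps P \<inter> {..<k}) else up_steps P \<inter> {..<k})"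
    by (auto simp: less_Suc_eq)
  then show ?case using Suc hgt_Suc[of "int k" P] by (auto simp: add.commute)
qed

lemma even_hgt_add: "0 \<le> x \<Longrightarrow> x \<le> int (length P) \<Longrightarrow> even (hgt P x + x)"
  using hgt_eq_card_up_steps[of "nat x" P] by simp

lemma dyck_hgt_nonneg: "dyck P \<Longrightarrow> 0 \<le> x \<Longrightarrow> x \<le> int (length P) \<Longrightarrow> 0 \<le> hgt P x"
  by (simp add: dyck_def)

lemma dyck_hgt_length: "dyck P \<Longrightarrow> hgt P (int (length P)) = 0"
  by (simp add: dyck_def)

lemma dyck_card_up_steps: "dyck P \<Longrightarrow> 2 * card (up_steps P) = length P"
  using hgt_eq_card_up_steps[of "length P" P] up_steps_subset[of P]
  by (simp add: dyck_hgt_length Int_absorb2)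

lemma rtrancl_adjacent_fst_less:
  assumes "(c, d) \<in> {(x, y). x \<in> R \<and> y \<in> R \<and> adjacent x y}\<^sup>*"
    and "\<forall>z\<in>R. fst z \<noteq> k" and "fst c < k"
  shows "fst d < k"
  using assms(1,3)
proof (induction rule: rtrancl_induct)
  case (step y z)
  then show ?case using assms(2) by (auto simp: adjacent_def)
qed

lemma connected_cellsI:
  assumes "\<And>c. c \<in> R \<Longrightarrow> (c, c0) \<in> {(x, y). x \<in> R \<and> y \<in> R \<and> adjacent x y}\<^sup>*"
  shows "connected_cells R"
proof -
  let ?step = "{(x, y). x \<in> R \<and> y \<in> R \<and> adjacent x y}"
  have "?step\<inverse> = ?step" by (auto simp: adjacent_def)
  then have from_c0: "(c0, d) \<in> ?step\<^sup>*" if "d \<in> R" for d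
    using rtrancl_converseI[OF assms[OF that]] by simp
  show ?thesis
    unfolding connected_cells_def
    using rtrancl_trans[OF assms from_c0] by blast
qed

locale dyck_pair =
  fixes D E :: "bool list"
  assumes dyck_D: "dyck D" and dyck_E: "dyck E" and length_E: "length E = length D + 2"
begin

definition n :: int where "n = int (length D)"

definition gap :: "int \<Rightarrow> int" where "gap x = hgt E x - hgt D x"

definition skew :: "(int \<times> int) set" where "skew = shape E - shape D"

lemma n_nonneg: "0 \<le> n"
  by (simp add: n_def)

lemma even_n: "even n"
  using dyck_card_up_steps[OF dyck_D] by (metis dvd_triv_left even_of_nat n_def)

lemma mem_shape_D:
  "(a, b) \<in> shape D \<longleftrightarrow> 0 \<le> b \<and> even (a + b) \<and> 0 \<le> a \<and> a \<le> n - 2 \<and> b + 1 \<le> hgt D (a + 1)"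
  by (simp add: shape_def n_def)

lemma mem_shape_E:
  "(a, b) \<in> shape E \<longleftrightarrow> 0 \<le> b \<and> even (a + b) \<and> 0 \<le> a \<and> a \<le> n \<and> b + 1 \<le> hgt E (a + 1)"
  by (simp add: shape_def n_def length_E)

lemma hgt_D_nonneg: "0 \<le> x \<Longrightarrow> x \<le> n \<Longrightarrow> 0 \<le> hgt D x"
  using dyck_hgt_nonneg[OF dyck_D] by (simp add: n_def)

lemma hgt_E_nonneg: "0 \<le> x \<Longrightarrow> x \<le> n + 2 \<Longrightarrow> 0 \<le> hgt E x"
  using dyck_hgt_nonneg[OF dyck_E] by (simp add: n_def length_E)

lemma even_hgt_D_add: "0 \<le> x \<Longrightarrow> x \<le> n \<Longrightarrow> even (hgt D x + x)"
  using even_hgt_add[of x D] by (simp add: n_def)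

lemma even_hgt_E_add: "0 \<le> x \<Longrightarrow> x \<le> n + 2 \<Longrightarrow> even (hgt E x + x)"
  using even_hgt_add[of x E] by (simp add: n_def length_E)

lemma hgt_D_n: "hgt D n = 0"
  using dyck_hgt_length[OF dyck_D] by (simp add: n_def)

lemma hgt_E_n_plus_1: "hgt E (n + 1) = 1"
proof -
  have "hgt E (n + 1 + 1) = 0" using dyck_hgt_length[OF dyck_E] by (simp add: n_def length_E)
  moreover have "\<bar>hgt E (n + 1 + 1) - hgt E (n + 1)\<bar> \<le> 1" by (rule hgt_Suc_diff)
  moreover have "0 \<le> hgt E (n + 1)" "even (hgt E (n + 1) + (n + 1))"
    using hgt_E_nonneg even_hgt_E_add n_nonneg by auto
  ultimately show ?thesis using even_n by presburger
qed

lemma corner_in_skew: "(n, 0) \<in> skew"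
  using even_n n_nonneg hgt_E_n_plus_1 by (simp add: skew_def mem_shape_D mem_shape_E)

lemma gap_0: "gap 0 = 0"
  by (simp add: gap_def hgt_nonpos)

lemma gap_n_le_2: "gap n \<le> 2"
  using hgt_Suc_diff[of E n] hgt_E_n_plus_1 hgt_D_n by (simp add: gap_def)

lemma even_gap: "0 \<le> x \<Longrightarrow> x \<le> n \<Longrightarrow> even (gap x)"
  using even_hgt_D_add[of x] even_hgt_E_add[of x] unfolding gap_def by presburger

lemma up_steps_subset_iff_mono_gap: "up_steps D \<subseteq> up_steps E \<longleftrightarrow> mono_on {0..n} gap"
proof -
  have gap_Suc: "gap (x + 1) = gap x + (if nat x \<in> up_steps E then 1 else -1)
                                     - (if nat x \<in> up_steps D then 1 else -1)"
    if "0 \<le> x" "x < n" for x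
    using that hgt_Suc[of x D] hgt_Suc[of x E] by (simp add: gap_def n_def length_E)
  have "up_steps D \<subseteq> up_steps E \<longleftrightarrow> (\<forall>x. 0 \<le> x \<and> x < n \<longrightarrow> gap x \<le> gap (x + 1))"
  proof
    assume "up_steps D \<subseteq> up_steps E"
    then show "\<forall>x. 0 \<le> x \<and> x < n \<longrightarrow> gap x \<le> gap (x + 1)" by (auto simp: gap_Suc)
  next
    assume mono: "\<forall>x. 0 \<le> x \<and> x < n \<longrightarrow> gap x \<le> gap (x + 1)"
    show "up_steps D \<subseteq> up_steps E"
    proof
      fix i assume i: "i \<in> up_steps D"
      then have "int i < n" by (simp add: up_steps_def n_def)
      show "i \<in> up_steps E"
      proof (rule ccontr)
        assume "i \<notin> up_steps E"
        then have "gap (int i + 1) = gap (int i) - 2" using i gap_Suc[of "int i"] \<open>int i < n\<close> by simp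
        then show False using mono[rule_format, of "int i"] \<open>int i < n\<close> by simp
      qed
    qed
  qed
  then show ?thesis by (simp add: mono_on_int_interval_iff)
qed

lemma shape_subset_iff_gap_nonneg: "shape D \<subseteq> shape E \<longleftrightarrow> (\<forall>x. 0 \<le> x \<and> x \<le> n \<longrightarrow> 0 \<le> gap x)"
proof
  assume sub: "shape D \<subseteq> shape E"
  show "\<forall>x. 0 \<le> x \<and> x \<le> n \<longrightarrow> 0 \<le> gap x"
  proof (intro allI impI)
    fix x assume x: "0 \<le> x \<and> x \<le> n"
    show "0 \<le> gap x"
    proof (cases "0 < hgt D x")
      case True
      then have "x \<noteq> 0" "x \<noteq> n" using hgt_D_n by (auto simp: hgt_nonpos)
      moreover have "even (x - 1 + (hgt D x - 1))" using even_hgt_D_add[of x] x by presburger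
      ultimately have "(x - 1, hgt D x - 1) \<in> shape D" using True x by (simp add: mem_shape_D)
      then have "(x - 1, hgt D x - 1) \<in> shape E" using sub by blast
      then show ?thesis by (simp add: mem_shape_E gap_def)
    next
      case False
      then show ?thesis using hgt_E_nonneg[of x] x by (simp add: gap_def)
    qed
  qed
next
  assume nonneg: "\<forall>x. 0 \<le> x \<and> x \<le> n \<longrightarrow> 0 \<le> gap x"
  show "shape D \<subseteq> shape E"
  proof (rule subrelI)
    fix a b assume ab: "(a, b) \<in> shape D"
    then have "0 \<le> gap (a + 1)" using nonneg by (simp add: mem_shape_D)
    then show "(a, b) \<in> shape E" using ab by (simp add: mem_shape_D mem_shape_E gap_def)
  qed
qed

lemma cell_above_D_in_skew:
  assumes "0 \<le> a" "a < n" "gap (a + 1) = 2"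
  shows "(a, hgt D (a + 1) + 1) \<in> skew"
proof -
  have "0 \<le> hgt D (a + 1)" "even (hgt D (a + 1) + (a + 1))"
    using assms hgt_D_nonneg even_hgt_D_add by auto
  then show ?thesis
    using assms unfolding skew_def Diff_iff mem_shape_D mem_shape_E gap_def by (simp; presburger)
qed

lemma gap_le_2_if_ribbon:
  assumes rib: "ribbon skew" and x: "0 \<le> x" "x \<le> n"
  shows "gap x \<le> 2"
proof (rule ccontr)
  assume "\<not> gap x \<le> 2"
  then have big: "hgt D x + 4 \<le> hgt E x" using even_gap[OF x] unfolding gap_def by presburger
  define h where "h = hgt D x"
  have "x \<noteq> 0" "x \<noteq> 1"
    using big hgt_Suc_diff[of E 0] hgt_D_nonneg[of 1] x by (auto simp: hgt_nonpos)
  then have x2: "2 \<le> x" using x by simp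
  have h: "0 \<le> h" "even (h + x)" using hgt_D_nonneg even_hgt_D_add x by (auto simp: h_def)
  have "\<bar>hgt E x - hgt E (x - 1)\<bar> \<le> 1" "\<bar>hgt D x - hgt D (x - 1)\<bar> \<le> 1"
    using hgt_Suc_diff[of _ "x - 1"] by simp_all
  moreover have "\<bar>hgt E (x + 1) - hgt E x\<bar> \<le> 1" "\<bar>hgt D (x + 1) - hgt D x\<bar> \<le> 1"
    by (rule hgt_Suc_diff)+
  \<comment> \<open>the forbidden 2x2 block centred at column x - 1, just above D\<close>
  ultimately have
    "(x - 2, h + 2) \<in> skew" "(x - 2 + 1, h + 2 + 1) \<in> skew"
    "(x - 2 + 1, h + 2 - 1) \<in> skew" "(x - 2 + 2, h + 2) \<in> skew"
    using x x2 big h unfolding skew_def Diff_iff mem_shape_D mem_shape_E h_def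
    by (simp_all; presburger)+
  then show False using rib unfolding ribbon_def by blast
qed

end

locale dyck_band = dyck_pair +
  assumes gap_0_or_2: "0 \<le> x \<Longrightarrow> x \<le> n \<Longrightarrow> gap x = 0 \<or> gap x = 2"
begin

lemma mem_skew_iff:
  "(a, b) \<in> skew \<longleftrightarrow>
     (a, b) = (n, 0) \<or> (0 \<le> a \<and> a < n \<and> gap (a + 1) = 2 \<and> b = hgt D (a + 1) + 1)"
proof
  assume "(a, b) \<in> skew"
  then have E: "0 \<le> b" "even (a + b)" "0 \<le> a" "a \<le> n" "b + 1 \<le> hgt E (a + 1)"
    and not_D: "b + 1 \<le> hgt D (a + 1) \<Longrightarrow> n - 2 < a"
    by (auto simp: skew_def mem_shape_D mem_shape_E)
  show "(a, b) = (n, 0) \<or> (0 \<le> a \<and> a < n \<and> gap (a + 1) = 2 \<and> b = hgt D (a + 1) + 1)"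
  proof (cases "a = n")
    case True
    then show ?thesis using E hgt_E_n_plus_1 by simp
  next
    case False
    then have a: "a < n" using E by simp
    have "hgt D (a + 1) \<le> b"
    proof (cases "a + 1 = n")
      case True
      then show ?thesis using hgt_D_n E by simp
    next
      case False
      then show ?thesis using not_D a by fastforce
    qed
    moreover have "even (hgt D (a + 1) + (a + 1))" using even_hgt_D_add[of "a + 1"] E a by simp
    moreover have "gap (a + 1) = 0 \<or> gap (a + 1) = 2" using gap_0_or_2[of "a + 1"] E a by simp
    ultimately have "gap (a + 1) = 2 \<and> b = hgt D (a + 1) + 1"
      using E unfolding gap_def by presburger
    then show ?thesis using E a by simp
  qed
next
  assume "(a, b) = (n, 0) \<or> (0 \<le> a \<and> a < n \<and> gap (a + 1) = 2 \<and> b = hgt D (a + 1) + 1)"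
  then show "(a, b) \<in> skew"
  proof
    assume "(a, b) = (n, 0)"
    then show ?thesis using corner_in_skew by simp
  next
    assume "0 \<le> a \<and> a < n \<and> gap (a + 1) = 2 \<and> b = hgt D (a + 1) + 1"
    then show ?thesis using cell_above_D_in_skew by blast
  qed
qed

lemma skew_no_diamond:
  "\<not> (\<exists>a b. (a, b) \<in> skew \<and> (a + 1, b + 1) \<in> skew \<and> (a + 1, b - 1) \<in> skew \<and> (a + 2, b) \<in> skew)"
  by (auto simp: mem_skew_iff)

lemma mono_gap_if_connected:
  assumes "connected_cells skew"
  shows "mono_on {0..n} gap"
  unfolding mono_on_int_interval_iff
proof (intro allI impI)
  fix x assume x: "0 \<le> x \<and> x < n"
  show "gap x \<le> gap (x + 1)"
  proof (rule ccontr)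
    assume "\<not> gap x \<le> gap (x + 1)"
    then have "gap x = 2" "gap (x + 1) = 0" using gap_0_or_2[of x] gap_0_or_2[of "x + 1"] x by auto
    then have "x \<noteq> 0" using gap_0 by auto
    then have "(x - 1, hgt D x + 1) \<in> skew" using \<open>gap x = 2\<close> x by (simp add: mem_skew_iff)
    then have "((x - 1, hgt D x + 1), (n, 0)) \<in> {(c, d). c \<in> skew \<and> d \<in> skew \<and> adjacent c d}\<^sup>*"
      using assms corner_in_skew unfolding connected_cells_def by blast
    \<comment> \<open>column x of the skew shape is empty, so no walk gets from column x - 1 to the corner\<close>
    moreover have "\<forall>c\<in>skew. fst c \<noteq> x" using \<open>gap (x + 1) = 0\<close> x by (auto simp: mem_skew_iff)
    ultimately have "n < x" using rtrancl_adjacent_fst_less by fastforce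
    then show False using x by simp
  qed
qed

lemma connected_if_mono_gap:
  assumes mono: "mono_on {0..n} gap"
  shows "connected_cells skew"
proof (rule connected_cellsI[of _ "(n, 0)"])
  let ?walk = "{(c, d). c \<in> skew \<and> d \<in> skew \<and> adjacent c d}\<^sup>*"
  have "0 \<le> a \<longrightarrow> gap (a + 1) = 2 \<longrightarrow> ((a, hgt D (a + 1) + 1), (n, 0)) \<in> ?walk"
    if "a \<le> n - 1" for a
    using that
  proof (induction a rule: int_le_induct)
    case base
    show ?case using corner_in_skew hgt_D_n by (auto simp: mem_skew_iff adjacent_def)
  next
    case (step a)
    show ?case
    proof (intro impI)
      assume a: "0 \<le> a - 1" and "gap (a - 1 + 1) = 2"
      then have "gap a = 2" by simp
      then have "gap (a + 1) = 2"
        using mono_onD[OF mono, of a "a + 1"] gap_0_or_2[of "a + 1"] step.hyps a by auto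
      then have "((a, hgt D (a + 1) + 1), (n, 0)) \<in> ?walk" using step.IH a by simp
      moreover have "\<bar>hgt D (a + 1) - hgt D a\<bar> = 1"
        using hgt_Suc[of a D] step.hyps a by (simp add: n_def)
      then have "adjacent (a - 1, hgt D a + 1) (a, hgt D (a + 1) + 1)" by (simp add: adjacent_def)
      moreover have "(a - 1, hgt D a + 1) \<in> skew" "(a, hgt D (a + 1) + 1) \<in> skew"
        using \<open>gap a = 2\<close> \<open>gap (a + 1) = 2\<close> step.hyps a by (simp_all add: mem_skew_iff)
      ultimately show "((a - 1, hgt D (a - 1 + 1) + 1), (n, 0)) \<in> ?walk"
        by (auto intro: converse_rtrancl_into_rtrancl)
    qed
  qed
  then show "(c, (n, 0)) \<in> ?walk" if "c \<in> skew" for c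
    using that by (cases c) (auto simp: mem_skew_iff)
qed

end

context dyck_pair
begin

lemma dyck_bandI:
  assumes "\<And>x. 0 \<le> x \<Longrightarrow> x \<le> n \<Longrightarrow> 0 \<le> gap x \<and> gap x \<le> 2"
  shows "dyck_band D E"
proof unfold_locales
  fix x :: int assume "0 \<le> x" "x \<le> n"
  then show "gap x = 0 \<or> gap x = 2" using assms[of x] even_gap[of x] by presburger
qed

theorem dcover_iff_up_steps_subset: "dcover D E \<longleftrightarrow> up_steps D \<subseteq> up_steps E"
proof
  assume cover: "dcover D E"
  then have rib: "ribbon skew" by (simp add: dcover_def skew_def)
  have "0 \<le> gap x \<and> gap x \<le> 2" if "0 \<le> x" "x \<le> n" for x
    using cover shape_subset_iff_gap_nonneg gap_le_2_if_ribbon[OF rib] that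
    by (auto simp: dcover_def)
  then interpret dyck_band D E by (rule dyck_bandI)
  show "up_steps D \<subseteq> up_steps E"
    using mono_gap_if_connected rib by (simp add: ribbon_def up_steps_subset_iff_mono_gap)
next
  assume "up_steps D \<subseteq> up_steps E"
  then have mono: "mono_on {0..n} gap" by (simp add: up_steps_subset_iff_mono_gap)
  have band: "0 \<le> gap x \<and> gap x \<le> 2" if "0 \<le> x" "x \<le> n" for x
    using mono_onD[OF mono, of 0 x] mono_onD[OF mono, of x n] gap_0 gap_n_le_2 n_nonneg that
    by auto
  then interpret dyck_band D E by (rule dyck_bandI)
  have "shape D \<subseteq> shape E" using band by (simp add: shape_subset_iff_gap_nonneg)
  then show "dcover D E"
    unfolding dcover_def ribbon_def
    using dyck_D dyck_E length_E connected_if_mono_gap[OF mono] skew_no_diamond corner_in_skew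
    by (auto simp: skew_def)
qed

end

lemma dcover_iff_length_up_steps:
  assumes "dyck D" "dyck E"
  shows "dcover D E \<longleftrightarrow> length E = length D + 2 \<and> up_steps D \<subseteq> up_steps E"
  using assms dyck_pair.dcover_iff_up_steps_subset[of D E] by (auto simp: dyck_pair_def dcover_def)

definition ballot :: "nat set \<Rightarrow> bool" where
  "ballot A \<longleftrightarrow> finite A \<and> (\<forall>x \<le> 2 * card A. x \<le> 2 * card (A \<inter> {..<x}))"

definition path_of :: "nat set \<Rightarrow> bool list" where
  "path_of A = map (\<lambda>i. i \<in> A) [0..<2 * card A]"

lemma ballot_subset_lessThan:
  assumes "ballot A"
  shows "A \<subseteq> {..<2 * card A}"
proof -
  have "finite A" "2 * card A \<le> 2 * card (A \<inter> {..<2 * card A})"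
    using assms by (auto simp: ballot_def)
  then have "A \<inter> {..<2 * card A} = A" by (intro card_seteq) auto
  then show ?thesis by blast
qed

lemma ballot_up_steps:
  assumes "dyck P"
  shows "ballot (up_steps P)"
proof -
  have "x \<le> 2 * card (up_steps P \<inter> {..<x})" if "x \<le> 2 * card (up_steps P)" for x
  proof -
    have "x \<le> length P" using that dyck_card_up_steps[OF assms] by simp
    then show ?thesis
      using hgt_eq_card_up_steps[of x P] dyck_hgt_nonneg[OF assms, of "int x"] by simp
  qed
  then show ?thesis by (simp add: ballot_def)
qed

lemma path_of_up_steps:
  assumes "dyck P"
  shows "path_of (up_steps P) = P"
proof (rule nth_equalityI)
  show "length (path_of (up_steps P)) = length P"
    using dyck_card_up_steps[OF assms] by (simp add: path_of_def)
  then show "path_of (up_steps P) ! i = P ! i" if "i < length (path_of (up_steps P))" for i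
    using that by (simp add: path_of_def up_steps_def)
qed

lemma up_steps_path_of: "ballot A \<Longrightarrow> up_steps (path_of A) = A"
  using ballot_subset_lessThan by (fastforce simp: up_steps_def path_of_def)

lemma dyck_path_of:
  assumes "ballot A"
  shows "dyck (path_of A)"
proof -
  have len: "length (path_of A) = 2 * card A" by (simp add: path_of_def)
  have hgt: "hgt (path_of A) (int k) = 2 * int (card (A \<inter> {..<k})) - int k"
    if "k \<le> 2 * card A" for k
    using hgt_eq_card_up_steps[of k "path_of A"] up_steps_path_of[OF assms] len that by simp
  have "0 \<le> hgt (path_of A) x" if "0 \<le> x" "x \<le> int (length (path_of A))" for x
  proof -
    have "nat x \<le> 2 * card (A \<inter> {..<nat x})" using assms that len by (simp add: ballot_def)
    then show ?thesis using hgt[of "nat x"] that len by simp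
  qed
  moreover have "hgt (path_of A) (int (length (path_of A))) = 0"
    using hgt[of "2 * card A"] ballot_subset_lessThan[OF assms] len by (simp add: Int_absorb2)
  ultimately show ?thesis by (simp add: dyck_def)
qed

lemma ballot_Un:
  assumes A: "ballot A" and B: "ballot B"
  shows "ballot (A \<union> B)"
proof -
  have fin: "finite A" "finite B" using A B by (auto simp: ballot_def)
  have "x \<le> 2 * card ((A \<union> B) \<inter> {..<x})" if x: "x \<le> 2 * card (A \<union> B)" for x
  proof -
    have mono: "card (C \<inter> {..<x}) \<le> card ((A \<union> B) \<inter> {..<x})" if "C \<subseteq> A \<union> B" for C
      using fin that by (intro card_mono) auto
    consider "x \<le> 2 * card A" | "x \<le> 2 * card B" | "2 * card A < x" "2 * card B < x" by linarith
    then show ?thesis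
    proof cases
      case 1
      then show ?thesis using A mono[of A] by (auto simp: ballot_def)
    next
      case 2
      then show ?thesis using B mono[of B] by (auto simp: ballot_def)
    next
      case 3
      then have "(A \<union> B) \<inter> {..<x} = A \<union> B"
        using ballot_subset_lessThan[OF A] ballot_subset_lessThan[OF B] by auto
      then show ?thesis using x by simp
    qed
  qed
  then show ?thesis using fin by (simp add: ballot_def)
qed

lemma ballot_Union: "finite F \<Longrightarrow> (\<And>A. A \<in> F \<Longrightarrow> ballot A) \<Longrightarrow> ballot (\<Union>F)"
  by (induction F rule: finite_induct) (auto intro: ballot_Un simp: ballot_def[of "{}"])

lemma ballot_insert_Min:
  assumes A: "ballot A" and B: "ballot B" and "A \<subset> B"
  shows "ballot (insert (Min (B - A)) A)"
proof -
  define s where "s = Min (B - A)"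
  have fin: "finite A" "finite B" using A B by (auto simp: ballot_def)
  have s: "s \<in> B" "s \<notin> A" and below_s: "\<And>y. y \<in> B \<Longrightarrow> y < s \<Longrightarrow> y \<in> A"
    using Min_in[of "B - A"] Min_le[of "B - A"] fin \<open>A \<subset> B\<close> by (auto simp: s_def)
  have "x \<le> 2 * card (insert s A \<inter> {..<x})" if x: "x \<le> 2 * card (insert s A)" for x
  proof (cases "x \<le> s")
    case True
    then have "insert s A \<inter> {..<x} = B \<inter> {..<x}" using \<open>A \<subset> B\<close> below_s by auto
    moreover have "card (insert s A) \<le> card B" using fin s \<open>A \<subset> B\<close> by (intro card_mono) auto
    ultimately show ?thesis using B x by (simp add: ballot_def)
  next
    case False
    then have "card (insert s A \<inter> {..<x}) = card (A \<inter> {..<x}) + 1" using fin s by simp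
    moreover have "x \<le> 2 * card (A \<inter> {..<x}) + 2"
    proof (cases "x \<le> 2 * card A")
      case True
      then show ?thesis using A by (auto simp: ballot_def)
    next
      case False
      then have "A \<inter> {..<x} = A" using ballot_subset_lessThan[OF A] by auto
      then show ?thesis using x fin s by simp
    qed
    ultimately show ?thesis by simp
  qed
  then show ?thesis using fin by (simp add: ballot_def s_def)
qed

lemma dle_path_of: "ballot A \<Longrightarrow> ballot B \<Longrightarrow> A \<subseteq> B \<Longrightarrow> dle (path_of A) (path_of B)"
proof (induction "card (B - A)" arbitrary: A rule: less_induct)
  case less
  show ?case
  proof (cases "A = B")
    case True
    then show ?thesis by (simp add: dle_def)
  next
    case False
    then have "A \<subset> B" using less.prems by auto
    define A' where "A' = insert (Min (B - A)) A"
    have A': "ballot A'" using ballot_insert_Min less.prems \<open>A \<subset> B\<close> by (simp add: A'_def)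
    have fin: "finite A" "finite B" using less.prems by (auto simp: ballot_def)
    have min: "Min (B - A) \<in> B - A" using fin \<open>A \<subset> B\<close> by (intro Min_in) auto
    then have "card (B - A') < card (B - A)" using fin unfolding A'_def by (intro psubset_card_mono) auto
    then have "dle (path_of A') (path_of B)" using less A' min by (simp add: A'_def)
    moreover have "length (path_of A') = length (path_of A) + 2"
      using fin min by (simp add: path_of_def A'_def)
    then have "dcover (path_of A) (path_of A')"
      using dcover_iff_length_up_steps[OF dyck_path_of dyck_path_of] up_steps_path_of less.prems A'
      by (auto simp: A'_def)
    ultimately show ?thesis by (simp add: dle_def converse_rtranclp_into_rtranclp)
  qed
qed

lemma dle_iff_up_steps_subset:
  assumes "dyck D" "dyck E"
  shows "dle D E \<longleftrightarrow> up_steps D \<subseteq> up_steps E"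
proof
  assume "dle D E"
  then show "up_steps D \<subseteq> up_steps E"
    unfolding dle_def
  proof (induction rule: rtranclp_induct)
    case (step y z)
    then have "dyck y" "dyck z" by (simp_all add: dcover_def)
    then show ?case using step dcover_iff_length_up_steps by blast
  qed simp
next
  assume "up_steps D \<subseteq> up_steps E"
  then show "dle D E"
    using dle_path_of[OF ballot_up_steps ballot_up_steps] path_of_up_steps assms by metis
qed

theorem mainTheorem5:
  shows "(\<forall>D E. dyck D \<and> dyck E \<and> dle D E \<and> dle E D \<longrightarrow> D = E)
    \<and> (\<forall>D E. dyck D \<and> dyck E \<longrightarrow>
         (\<exists>J. dyck J \<and> dle D J \<and> dle E J \<and>
              (\<forall>U. dyck U \<and> dle D U \<and> dle E U \<longrightarrow> dle J U)))
    \<and> (\<forall>D E. dyck D \<and> dyck E \<longrightarrow>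
         (\<exists>M. dyck M \<and> dle M D \<and> dle M E \<and>
              (\<forall>L. dyck L \<and> dle L D \<and> dle L E \<longrightarrow> dle L M)))"
proof (intro conjI allI impI)
  fix D E assume "dyck D \<and> dyck E \<and> dle D E \<and> dle E D"
  then have "dyck D" "dyck E" "up_steps D = up_steps E" using dle_iff_up_steps_subset by blast+
  then show "D = E" by (metis path_of_up_steps)
next
  fix D E assume "dyck D \<and> dyck E"
  then have DE: "dyck D" "dyck E" by simp_all
  define J where "J = path_of (up_steps D \<union> up_steps E)"
  have "ballot (up_steps D \<union> up_steps E)" using DE by (simp add: ballot_Un ballot_up_steps)
  then have J: "dyck J" "up_steps J = up_steps D \<union> up_steps E"
    by (simp_all add: J_def dyck_path_of up_steps_path_of)
  then have "dle D J" "dle E J" using DE by (simp_all add: dle_iff_up_steps_subset)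
  moreover have "dle J U" if "dyck U" "dle D U" "dle E U" for U
    using that DE J by (simp add: dle_iff_up_steps_subset)
  ultimately show "\<exists>J. dyck J \<and> dle D J \<and> dle E J \<and> (\<forall>U. dyck U \<and> dle D U \<and> dle E U \<longrightarrow> dle J U)"
    using J by blast
next
  fix D E assume "dyck D \<and> dyck E"
  then have DE: "dyck D" "dyck E" by simp_all
  define F where "F = {C. C \<subseteq> up_steps D \<inter> up_steps E \<and> ballot C}"
  define M where "M = path_of (\<Union>F)"
  have "finite F" unfolding F_def by (rule finite_subset[of _ "Pow (up_steps D \<inter> up_steps E)"]) auto
  then have "ballot (\<Union>F)" by (rule ballot_Union) (simp add: F_def)
  then have M: "dyck M" "up_steps M = \<Union>F" by (simp_all add: M_def dyck_path_of up_steps_path_of)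
  then have "dle M D" "dle M E" using DE by (auto simp: dle_iff_up_steps_subset F_def)
  moreover have "dle L M" if "dyck L" "dle L D" "dle L E" for L
  proof -
    have "up_steps L \<in> F" using that DE ballot_up_steps by (simp add: F_def dle_iff_up_steps_subset)
    then show ?thesis using that M by (auto simp: dle_iff_up_steps_subset)
  qed
  ultimately show "\<exists>M. dyck M \<and> dle M D \<and> dle M E \<and> (\<forall>L. dyck L \<and> dle L D \<and> dle L E \<longrightarrow> dle L M)"
    using M by blast
qed

end
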